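(* Let $m$ be a positive integer and let $r,\ell,h,p,q$ be nonnegative integers with $\ell\ge 2$ satisfying: (1) $h<2^{\ell-2}$; (2) $rm=p\cdot 2^{\ell+1}+2^{\ell-1}+h$; (3) $(r+1)m\leq p\cdot 2^{\ell+1}+5\cdot 2^{\ell-2}$; (4) $(r+2^{\ell-2})m=q\cdot 2^{\ell+1}+3\cdot 2^{\ell-2}+h$; (5) $\mathbf t_{p+1}\neq\mathbf t_{q+1}$. Then $\langle rm+1,(r+1)m\rangle=\langle (r+2^{\ell-2})m+1,(r+2^{\ell-2}+1)m\rangle$, and consequently $\mathfrak K(m)\leq r+2^{\ell-2}+1$.
   Context: The Thue–Morse word is $\mathbf t=\mathbf t_1\mathbf t_2\cdots$ where $\mathbf t_i\in\{0,1\}$ has the parity of the number of $1$'s in the binary expansion of $i-1$. For positive integers $\alpha\le\beta$, $\langle\alpha,\beta\rangle=\mathbf t_\alpha\mathbf t_{\alpha+1}\cdots\mathbf t_\beta$. A $k$-anti-power is a word $w_1\cdots w_k$ with $w_1,\dots,w_k$ pairwise distinct words of equal length. For a positive integer $m$, $\mathfrak K(m)$ is the smallest positive integer $k$ such that the prefix $\langle 1,km\rangle$ of $\mathbf t$ is not a $k$-anti-power (i.e. the smallest $k$ such that $\langle (k-1)m+1,km\rangle=\langle nm+1,(n+1)m\rangle$ for some $0\le n<k-1$). *)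

theory Defs
  imports Main
begin

fun popcount :: "nat \<Rightarrow> nat" where
  "popcount n = (if n = 0 then 0 else n mod 2 + popcount (n div 2))"

text \<open>Thue--Morse word, 1-indexed: t i (i \<ge> 1) is the parity of popcount (i - 1).\<close>
definition tm :: "nat \<Rightarrow> nat" where
  "tm i = popcount (i - 1) mod 2"

definition factor :: "nat \<Rightarrow> nat \<Rightarrow> nat list" where
  "factor \<alpha> \<beta> = map tm [\<alpha>..<Suc \<beta>]"

text \<open>Smallest positive k such that the prefix <1,km> is not a k-anti-power.\<close>
definition antipow_K :: "nat \<Rightarrow> nat" where
  "antipow_K m = (LEAST k. 0 < k \<and>
      (\<exists>n < k - 1. factor ((k - 1) * m + 1) (k * m) = factor (n * m + 1) ((n + 1) * m)))"

end

theory Submission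
  imports Defs
begin

text \<open>
  Put \<open>K = 2^(l-2)\<close>. Since \<open>t (i+1)\<close> is the parity of the popcount of \<open>i\<close>, by (2) and (3)
  the block \<open>\<langle>rm+1,(r+1)m\<rangle>\<close> reads these parities at \<open>p 2^(l+1) + 2K + s\<close>, and by (4)
  the block starting at \<open>(r+K)m+1\<close> reads them at \<open>q 2^(l+1) + 3K + s\<close>, for the same
  offsets \<open>s < 3K\<close>. The high parts \<open>p\<close>, \<open>q\<close> and the low parts contribute separately to
  the popcount. The high parts have different parities by (5), and so do the low parts
  \<open>2K + s\<close> and \<open>3K + s\<close>: writing \<open>s = cK + t\<close> with \<open>c < 3\<close> and \<open>t < K\<close>, the leading
  digits \<open>2 + c\<close> and \<open>3 + c\<close> have popcounts \<open>(1,2)\<close>, \<open>(2,1)\<close>, \<open>(1,2)\<close>. The two parity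
  flips cancel, so the blocks coincide, and the block with index \<open>r + K\<close> repeats block \<open>r\<close>.
\<close>

lemma popcount_rec: "popcount n = n mod 2 + popcount (n div 2)"
  by (cases "n = 0") (simp_all add: popcount.simps[of n])

declare popcount.simps [simp del]

lemma popcount_0 [simp]: "popcount 0 = 0"
  by (simp add: popcount.simps)

lemma popcount_add_mult_power2:
  assumes "b < 2 ^ n"
  shows "popcount (a * 2 ^ n + b) = popcount a + popcount b"
  using assms
proof (induction n arbitrary: b)
  case 0
  then show ?case by simp
next
  case (Suc n)
  have "(a * 2 ^ Suc n + b) mod 2 = b mod 2"
    by (simp add: mod_add_left_eq[symmetric])
  moreover have "(a * 2 ^ Suc n + b) div 2 = a * 2 ^ n + b div 2"
    by simp
  moreover have "popcount (a * 2 ^ n + b div 2) = popcount a + popcount (b div 2)"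
    using Suc.prems by (intro Suc.IH) auto
  ultimately show ?case
    using popcount_rec[of "a * 2 ^ Suc n + b"] popcount_rec[of b] by simp
qed

lemma even_popcount_2_iff_odd_popcount_3:
  assumes "s < 3 * 2 ^ k"
  shows "even (popcount (2 * 2 ^ k + s)) \<longleftrightarrow> odd (popcount (3 * 2 ^ k + s))"
proof -
  define c t where "c = s div 2 ^ k" and "t = s mod 2 ^ k"
  have t: "t < 2 ^ k"
    by (simp add: t_def)
  have c: "c < 3"
    using assms by (simp add: c_def less_mult_imp_div_less)
  have "d * 2 ^ k + s = (d + c) * 2 ^ k + t" for d :: nat
    using div_mult_mod_eq[of s "2 ^ k"] by (simp add: c_def t_def add_mult_distrib)
  then have "popcount (d * 2 ^ k + s) = popcount (d + c) + popcount t" for d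
    by (simp only: popcount_add_mult_power2[OF t])
  moreover have "even (popcount (2 + c)) \<longleftrightarrow> odd (popcount (3 + c))"
  proof -
    have "popcount 1 = 1" "popcount 2 = 1" "popcount 3 = 2" "popcount 4 = 1" "popcount 5 = 2"
      by (simp_all add: popcount_rec[of 1] popcount_rec[of "Suc 0"] popcount_rec[of 2]
          popcount_rec[of 3] popcount_rec[of 4] popcount_rec[of 5])
    moreover have "c = 0 \<or> c = 1 \<or> c = 2"
      using c by linarith
    ultimately show ?thesis
      by (elim disjE) simp_all
  qed
  ultimately show ?thesis
    by auto
qed

lemma tm_Suc_eq_iff: "tm (Suc i) = tm (Suc j) \<longleftrightarrow> (even (popcount i) \<longleftrightarrow> even (popcount j))"
  by (auto simp: tm_def even_iff_mod_2_eq_zero odd_iff_mod_2_eq_one)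

lemma tm_eq_if_high_parities_differ:
  assumes "s < 3 * 2 ^ k" and "tm (p + 1) \<noteq> tm (q + 1)"
  shows "tm (p * 2 ^ (k + 3) + 2 * 2 ^ k + s + 1) = tm (q * 2 ^ (k + 3) + 3 * 2 ^ k + s + 1)"
proof -
  have "2 * 2 ^ k + s < 2 ^ (k + 3)" "3 * 2 ^ k + s < 2 ^ (k + 3)"
    using assms(1) by (simp_all add: power_add)
  then have "popcount (p * 2 ^ (k + 3) + (2 * 2 ^ k + s)) = popcount p + popcount (2 * 2 ^ k + s)"
    and "popcount (q * 2 ^ (k + 3) + (3 * 2 ^ k + s)) = popcount q + popcount (3 * 2 ^ k + s)"
    by (simp_all only: popcount_add_mult_power2)
  moreover have "even (popcount p) \<longleftrightarrow> odd (popcount q)"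
    using assms(2) tm_Suc_eq_iff[of p q] by simp
  ultimately show ?thesis
    using even_popcount_2_iff_odd_popcount_3[OF assms(1)] by (simp add: tm_Suc_eq_iff add.assoc)
qed

lemma length_factor: "length (factor \<alpha> \<beta>) = Suc \<beta> - \<alpha>"
  by (auto simp: factor_def)

lemma nth_factor: "j < Suc \<beta> - \<alpha> \<Longrightarrow> factor \<alpha> \<beta> ! j = tm (\<alpha> + j)"
  by (simp add: factor_def del: upt_Suc)

lemma factor_blocks_eqI:
  assumes "\<And>j. j < m \<Longrightarrow> tm (a * m + j + 1) = tm (b * m + j + 1)"
  shows "factor (a * m + 1) ((a + 1) * m) = factor (b * m + 1) ((b + 1) * m)"
proof (rule nth_equalityI)
  show "length (factor (a * m + 1) ((a + 1) * m)) = length (factor (b * m + 1) ((b + 1) * m))"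
    by (simp add: length_factor)
next
  fix j
  assume "j < length (factor (a * m + 1) ((a + 1) * m))"
  then have "j < m"
    by (simp add: length_factor)
  then show "factor (a * m + 1) ((a + 1) * m) ! j = factor (b * m + 1) ((b + 1) * m) ! j"
    using assms[of j] by (simp add: nth_factor)
qed

lemma antipow_K_le:
  assumes "n < k" and "factor (n * m + 1) ((n + 1) * m) = factor (k * m + 1) ((k + 1) * m)"
  shows "antipow_K m \<le> k + 1"
  unfolding antipow_K_def
  by (rule Least_le) (use assms in auto)

theorem lemma1:
  fixes m r l h p q :: nat
  assumes "0 < m" and "2 \<le> l"
    and "h < 2 ^ (l - 2)"
    and "r * m = p * 2 ^ (l + 1) + 2 ^ (l - 1) + h"
    and "(r + 1) * m \<le> p * 2 ^ (l + 1) + 5 * 2 ^ (l - 2)"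
    and "(r + 2 ^ (l - 2)) * m = q * 2 ^ (l + 1) + 3 * 2 ^ (l - 2) + h"
    and "tm (p + 1) \<noteq> tm (q + 1)"
  shows "factor (r * m + 1) ((r + 1) * m)
           = factor ((r + 2 ^ (l - 2)) * m + 1) ((r + 2 ^ (l - 2) + 1) * m)
         \<and> antipow_K m \<le> r + 2 ^ (l - 2) + 1"
proof -
  obtain k where l: "l = k + 2"
    using assms(2) by (metis add.commute le_Suc_ex)
  have pow: "2 ^ (l - 2) = (2::nat) ^ k" "2 ^ (l - 1) = 2 * (2::nat) ^ k"
    "2 ^ (l + 1) = (2::nat) ^ (k + 3)"
    by (simp_all add: l power_add)
  define r' where "r' = r + 2 ^ k"
  have blocks_eq: "factor (r * m + 1) ((r + 1) * m) = factor (r' * m + 1) ((r' + 1) * m)"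
  proof -
    have "tm (r * m + j + 1) = tm (r' * m + j + 1)" if "j < m" for j
    proof -
      have "r * m + m \<le> p * 2 ^ (k + 3) + 5 * 2 ^ k"
        using assms(5)[unfolded pow] by simp
      then have s: "h + j < 3 * 2 ^ k"
        using assms(4)[unfolded pow] that by linarith
      have "r * m + j = p * 2 ^ (k + 3) + 2 * 2 ^ k + (h + j)"
        and "r' * m + j = q * 2 ^ (k + 3) + 3 * 2 ^ k + (h + j)"
        using assms(4,6)[unfolded pow] by (simp_all add: r'_def algebra_simps)
      then show ?thesis
        using tm_eq_if_high_parities_differ[OF s assms(7)] by (simp only:)
    qed
    then show ?thesis
      by (rule factor_blocks_eqI)
  qed
  moreover have "antipow_K m \<le> r' + 1"
    by (rule antipow_K_le[OF _ blocks_eq]) (simp add: r'_def)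
  ultimately show ?thesis
    by (simp add: r'_def l)
qed

end
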